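(* In the setting described in the context, assume moreover $b\ge1000\log^2n$. Then: 1. $\|\overline s^{-1}\widetilde\delta_s\|_2\le2\epsilon$, $\|\overline x^{-1}\widetilde\delta_x\|_2\le2\epsilon$, $\|\mathbb E[\overline s^{-1}\widehat\delta_s]\|_2\le2\epsilon$, $\|\mathbb E[\overline x^{-1}\widehat\delta_x]\|_2\le2\epsilon$, $\|\overline\mu^{-1}(\widetilde\delta_t-\overline\delta_t)\|_2\le\epsilon_{\mathrm{mp}}\epsilon$, and $\|\overline\mu^{-1}(\overline\delta_t+\widetilde\delta_\Phi)\|_2\le5\epsilon$. 2. For every $i\in[n]$: $\operatorname{Var}[\overline x_i^{-1}\widehat\delta_{x,i}]\le2\epsilon^2/b$ and $\operatorname{Var}[\overline s_i^{-1}\widehat\delta_{s,i}]\le2\epsilon^2/b$. 3. $\|\overline x^{-1}(\overline x-\widetilde x)\|_\infty\le2\epsilon_{\mathrm{mp}}$, $\|\overline s^{-1}(\overline s-\widetilde s)\|_\infty\le2\epsilon_{\mathrm{mp}}$, $\|\overline x^{-1}\widetilde\delta_x\|_\infty\le2\epsilon$, $\|\overline s^{-1}\widetilde\delta_s\|_\infty\le2\epsilon$, and $\|\overline\mu^{-1}\widetilde\delta_\mu\|_\infty\le5\epsilon$. 4. $\|\overline x^{-1}\widehat\delta_x\|_\infty\le3\epsilon$ and $\|\overline s^{-1}\widehat\delta_s\|_\infty\le3\epsilon$ hold with probability $1-1/n^4$.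
   Context: Let $n\ge2$ and $A\in\mathbb{R}^{d\times n}$ have full row rank $d\le n$. Products, quotients, square roots and inverses of vectors are coordinatewise; for $u\in\mathbb{R}^n$, the capital letter $U$ denotes $\operatorname{diag}(u)$. For $u\in\mathbb{R}^n_{>0}$ and $v\in\mathbb{R}^n_{>0}$ (or a scalar $v>0$, identified with $v\mathbf 1$), $u\approx_\gamma v$ means $(1-\gamma)v_i\le u_i\le(1+\gamma)v_i$ for all $i$. Parameters: $\epsilon,\epsilon_{\mathrm{mp}}\in(0,10^{-4})$, $\lambda>\log n$; $\Phi_\lambda(r)=\sum_{i=1}^n\cosh(\lambda r_i)$, with $\nabla\Phi_\lambda(r)=(\lambda\sinh(\lambda r_i))_i$. Let $t>0$, $t^{\mathrm{new}}=(1-\frac{\epsilon}{3\sqrt n})t$. Let $\overline x,\overline s\in\mathbb{R}^n_{>0}$, $\overline w=\overline x/\overline s$, $\overline\mu=\overline x\,\overline s$, $\overline\delta_t=(\frac{t^{\mathrm{new}}}{t}-1)\overline\mu$. Let $\widetilde w,\widetilde\mu\in\mathbb{R}^n_{>0}$ satisfy $\widetilde\mu\approx_{\epsilon_{\mathrm{mp}}}\overline\mu$, $\widetilde w\approx_{\epsilon_{\mathrm{mp}}}\overline w$, and $\overline\mu\approx_{0.1}t$. Define $\widetilde x=\sqrt{\widetilde w\widetilde\mu}$, $\widetilde s=\sqrt{\widetilde\mu/\widetilde w}$, $\widetilde P=\widetilde W^{1/2}A^\top(A\widetilde WA^\top)^{-1}A\widetilde W^{1/2}$, $\widetilde\delta_t=(\frac{t^{\mathrm{new}}}{t}-1)\widetilde\mu$,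 $\widetilde\delta_\Phi=-\frac\epsilon2t^{\mathrm{new}}\frac{\nabla\Phi_\lambda(\widetilde\mu/t-1)}{\|\nabla\Phi_\lambda(\widetilde\mu/t-1)\|_2}$ (the gradient is assumed nonzero), $\widetilde\delta_\mu=\widetilde\delta_t+\widetilde\delta_\Phi$, $\widetilde\delta_x=\widetilde X(\widetilde X\widetilde S)^{-1/2}(I-\widetilde P)(\widetilde X\widetilde S)^{-1/2}\widetilde\delta_\mu$, $\widetilde\delta_s=\widetilde S(\widetilde X\widetilde S)^{-1/2}\widetilde P(\widetilde X\widetilde S)^{-1/2}\widetilde\delta_\mu$. Let $R\in\mathbb{R}^{b\times n}$ be a random subsampled randomized Hadamard transform; it satisfies, for every fixed $h\in\mathbb{R}^n$, every $i$ and every $\delta\in(0,1)$: $\mathbb E[R^\top Rh]=h$, $\mathbb E[(R^\top Rh)_i^2]\le h_i^2+\frac1b\|h\|_2^2$, and $\Pr[|(R^\top Rh)_i-h_i|>\|h\|_2\log(n/\delta)/\sqrt b]\le\delta$. Define $\widehat\delta_x=\widetilde X(\widetilde X\widetilde S)^{-1/2}(I-R^\top R\widetilde P)(\widetilde X\widetilde S)^{-1/2}\widetilde\delta_\mu$ and $\widehat\delta_s=\widetilde S(\widetilde X\widetilde S)^{-1/2}R^\top R\widetilde P(\widetilde X\widetilde S)^{-1/2}\widetilde\delta_\mu$. Expectations, variances and probabilities are over the randomness of $R$; all other quantities are deterministic. *)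

theory Defs
  imports "HOL-Analysis.Analysis" "HOL-Probability.Probability"
begin

definition vdiag :: "real^'n \<Rightarrow> real^'n^'n" where
  "vdiag u = (\<chi> i j. if i = j then u$i else 0)"

definition vmul :: "real^'n \<Rightarrow> real^'n \<Rightarrow> real^'n" where
  "vmul u v = (\<chi> i. u$i * v$i)"

definition vdiv :: "real^'n \<Rightarrow> real^'n \<Rightarrow> real^'n" where
  "vdiv u v = (\<chi> i. u$i / v$i)"

definition vsqrt :: "real^'n \<Rightarrow> real^'n" where
  "vsqrt u = (\<chi> i. sqrt (u$i))"

definition vinv :: "real^'n \<Rightarrow> real^'n" where
  "vinv u = (\<chi> i. 1 / u$i)"

definition vpos :: "real^'n \<Rightarrow> bool" where
  "vpos u \<longleftrightarrow> (\<forall>i. u$i > 0)"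

definition approx_vec :: "real \<Rightarrow> real^'n \<Rightarrow> real^'n \<Rightarrow> bool" where
  "approx_vec \<gamma> u v \<longleftrightarrow> (\<forall>i. (1-\<gamma>) * v$i \<le> u$i \<and> u$i \<le> (1+\<gamma>) * v$i)"

text \<open>Gradient of Phi_lambda(r) = sum_i cosh(lambda r_i).\<close>
definition gradPhi :: "real \<Rightarrow> real^'n \<Rightarrow> real^'n" where
  "gradPhi lam r = (\<chi> i. lam * sinh (lam * r$i))"

end

(* Let v = (X S)^(-1/2) delta_mu be the scaled step and P the weighted projection.  Each of the
   four steps is a coordinatewise rescaling of v - P v or of P v, the sketched ones with R^T R
   applied to P v.  The rescaling factors are at most 1.13 / sqrt t, because x~, s~ and mu~ are
   multiplicatively close to xbar, sbar and t.  Moreover ||v|| <= 0.94 eps sqrt t: the centering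
   part of delta_mu becomes (tnew / t - 1) sqrt mu~, of norm about (eps / 3) sqrt t, and the
   potential part has norm at most (eps / 2) t before the division by sqrt mu~ ~ sqrt t.  Since P
   is an orthogonal projection, ||P v|| and ||v - P v|| are at most ||v||; unbiasedness of R^T R
   then gives the expectations, its second-moment bound the variances, and its tail bound with
   delta = n^-5 together with a union bound over the coordinates the high-probability bounds. *)

theory Submission
  imports Defs
begin

section \<open>Diagonal scalings and weighted projections\<close>

lemma vdiag_mult_vec: "vdiag u *v x = vmul u x"
  unfolding vdiag_def vmul_def matrix_vector_mult_def
  by (simp add: vec_eq_iff if_distrib[where f="\<lambda>a. a * _"] cong: if_cong)

lemma vdiag_mult_vdiag: "vdiag u ** vdiag v = vdiag (vmul u v)"
  unfolding vdiag_def vmul_def matrix_matrix_mult_def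
  by (simp add: vec_eq_iff if_distrib[where f="\<lambda>a. a * _"] cong: if_cong)

lemma transpose_vdiag: "transpose (vdiag u) = vdiag u"
  by (simp add: vdiag_def transpose_def vec_eq_iff)

lemma vdiag_scaled_mult_vec:
  "(vdiag u ** vdiag (vinv z) ** M ** vdiag (vinv z)) *v y = vmul (vdiv u z) (M *v vdiv y z)"
  by (simp add: vdiag_mult_vec vec_eq_iff vmul_def vdiv_def vinv_def flip: matrix_vector_mul_assoc)

lemma vdiv_add_left: "vdiv (x + y) z = vdiv x z + vdiv y z"
  by (simp add: vdiv_def vec_eq_iff add_divide_distrib)

lemma vdiv_scaleR_left: "vdiv (c *\<^sub>R x) z = c *\<^sub>R vdiv x z"
  by (simp add: vdiv_def vec_eq_iff)

lemma vdiv_vmul_left: "vdiv (vmul c x) z = vmul (vdiv c z) x"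
  by (simp add: vdiv_def vmul_def vec_eq_iff)

lemma gram_matrix_invertible:
  fixes B :: "real^'n^'d"
  assumes "rank B = CARD('d)"
  shows "invertible (B ** transpose B)"
proof -
  have inj: "inj ((*v) (transpose B))"
    using assms by (simp add: rank_transpose flip: full_rank_injective)
  have "\<forall>x. (B ** transpose B) *v x = 0 \<longrightarrow> x = 0"
  proof (intro allI impI)
    fix x
    assume "(B ** transpose B) *v x = 0"
    have "(transpose B *v x) \<bullet> (transpose B *v x) = x \<bullet> ((B ** transpose B) *v x)"
      using dot_lmul_matrix[of x B "transpose B *v x"]
      by (simp only: transpose_matrix_vector flip: matrix_vector_mul_assoc)
    then have "transpose B *v x = 0"
      using \<open>(B ** transpose B) *v x = 0\<close> by simp
    then show "x = 0"
      using inj by (metis inj_eq matrix_vector_mult_0_right)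
  qed
  then show ?thesis
    by (simp only: invertible_left_inverse matrix_left_invertible_ker)
qed

lemma invertible_imp_matrix_inv:
  assumes "invertible M"
  shows "M ** matrix_inv M = mat 1" "matrix_inv M ** M = mat 1"
  using someI_ex[OF assms[unfolded invertible_def]] by (simp_all add: matrix_inv_def)

lemma orthogonal_projection_symmetric_idempotent:
  fixes B :: "real^'n^'d"
  assumes "rank B = CARD('d)"
  defines "P \<equiv> transpose B ** matrix_inv (B ** transpose B) ** B"
  shows "transpose P = P" "P ** P = P"
proof -
  define M where "M = B ** transpose B"
  have P_eq: "P = transpose B ** matrix_inv M ** B"
    by (simp add: P_def M_def)
  have inv: "M ** matrix_inv M = mat 1" "matrix_inv M ** M = mat 1"
    using invertible_imp_matrix_inv gram_matrix_invertible[OF assms(1)] by (simp_all add: M_def)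
  have "transpose (matrix_inv M) ** M = mat 1"
    by (metis inv(1) M_def matrix_transpose_mul transpose_mat transpose_transpose)
  then have "transpose (matrix_inv M) = matrix_inv M"
    by (metis inv(1) matrix_mul_assoc matrix_mul_lid matrix_mul_rid)
  then show "transpose P = P"
    by (simp only: P_eq matrix_transpose_mul transpose_transpose matrix_mul_assoc)
  have "P ** P = transpose B ** (matrix_inv M ** M) ** matrix_inv M ** B"
    by (simp only: P_eq M_def matrix_mul_assoc)
  also have "\<dots> = P"
    by (simp only: inv(2) matrix_mul_rid P_eq)
  finally show "P ** P = P" .
qed

lemma weighted_projection_symmetric_idempotent:
  fixes A :: "real^'n^'d" and w :: "real^'n"
  assumes "rank A = CARD('d)" and "vpos w"
  defines "P \<equiv> vdiag (vsqrt w) ** transpose A ** matrix_inv (A ** vdiag w ** transpose A)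
               ** A ** vdiag (vsqrt w)"
  shows "transpose P = P" "P ** P = P"
proof -
  define B where "B = A ** vdiag (vsqrt w)"
  have w: "\<And>i. 0 < w$i"
    using assms(2) by (simp add: vpos_def)
  have "vdiag (vsqrt w) ** vdiag (vinv (vsqrt w)) = mat 1"
    unfolding vdiag_mult_vdiag using w
    by (auto simp: vdiag_def vmul_def vsqrt_def vinv_def mat_def vec_eq_iff) (metis less_irrefl)
  then have "rank A \<le> rank B"
    using rank_mul_le_left[of B "vdiag (vinv (vsqrt w))"]
    by (simp add: B_def flip: matrix_mul_assoc)
  then have rank: "rank B = CARD('d)"
    using assms(1) rank_bound[of B] by simp
  have "vdiag (vsqrt w) ** vdiag (vsqrt w) = vdiag w"
    using w by (simp add: vdiag_mult_vdiag vmul_def vsqrt_def vec_eq_iff less_imp_le)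
  moreover have "B ** transpose B = A ** (vdiag (vsqrt w) ** vdiag (vsqrt w)) ** transpose A"
    by (simp add: B_def matrix_transpose_mul transpose_vdiag matrix_mul_assoc)
  ultimately have gram: "A ** vdiag w ** transpose A = B ** transpose B"
    by simp
  have "P = transpose B ** matrix_inv (B ** transpose B) ** B"
    unfolding P_def gram by (simp add: B_def matrix_transpose_mul transpose_vdiag matrix_mul_assoc)
  then show "transpose P = P" "P ** P = P"
    using orthogonal_projection_symmetric_idempotent[OF rank] by simp_all
qed

lemma projection_norm_le:
  fixes P :: "real^'n^'n"
  assumes "transpose P = P" and "P ** P = P"
  shows "norm (P *v v) \<le> norm v" and "norm (v - P *v v) \<le> norm v"
proof -
  have "(P *v v) \<bullet> (v - P *v v) = v \<bullet> (P *v (v - P *v v))"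
    by (metis assms(1) dot_lmul_matrix vector_transpose_matrix)
  also have "\<dots> = 0"
    by (simp add: matrix_vector_mult_diff_distrib matrix_vector_mul_assoc assms(2))
  finally have "(norm v)\<^sup>2 = (norm (P *v v))\<^sup>2 + (norm (v - P *v v))\<^sup>2"
    using norm_add_Pythagorean[of "P *v v" "v - P *v v"] by (simp add: orthogonal_def)
  then show "norm (P *v v) \<le> norm v" "norm (v - P *v v) \<le> norm v"
    by (smt (verit) norm_ge_zero power2_le_imp_le zero_le_power2)+
qed

section \<open>Coordinatewise norm estimates\<close>

lemma norm_le_scaled_componentwise_cart:
  fixes x y :: "real^'n"
  assumes "0 \<le> c" and "\<And>i. \<bar>x$i\<bar> \<le> c * \<bar>y$i\<bar>"
  shows "norm x \<le> c * norm y"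
proof -
  have "norm x \<le> norm (c *\<^sub>R y)"
    by (rule norm_le_componentwise_cart) (use assms in \<open>simp add: abs_mult\<close>)
  then show ?thesis
    using assms(1) by simp
qed

lemma infnorm_le_cart:
  fixes x :: "real^'n"
  assumes "\<And>i. \<bar>x$i\<bar> \<le> B"
  shows "infnorm x \<le> B"
  unfolding infnorm_cart by (rule cSup_least) (use assms in auto)

lemma norm_le_sqrt_card_cart:
  fixes x :: "real^'n"
  assumes "\<And>i. \<bar>x$i\<bar> \<le> B"
  shows "norm x \<le> sqrt CARD('n) * B"
  using norm_le_infnorm[of x] infnorm_le_cart[OF assms]
  by (smt (verit) DIM_cart DIM_real mult.right_neutral mult_left_mono real_sqrt_ge_zero
      of_nat_0_le_iff)

lemma norm_vmul_le:
  assumes "\<And>i. \<bar>c$i\<bar> \<le> K"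
  shows "norm (vmul c x) \<le> K * norm x"
proof (rule norm_le_scaled_componentwise_cart)
  show "0 \<le> K"
    using assms abs_ge_zero order_trans by blast
  show "\<bar>vmul c x $ i\<bar> \<le> K * \<bar>x$i\<bar>" for i
    using assms by (simp add: vmul_def abs_mult mult_right_mono)
qed

lemma infnorm_vmul_le:
  assumes "\<And>i. \<bar>c$i\<bar> \<le> K" and "\<And>i. \<bar>x$i\<bar> \<le> B"
  shows "infnorm (vmul c x) \<le> K * B"
proof (rule infnorm_le_cart)
  fix i
  show "\<bar>vmul c x $ i\<bar> \<le> K * B"
    using assms[of i] by (simp add: vmul_def abs_mult mult_mono')
qed

lemma norm_vdiv_le:
  assumes "0 < c" and "\<And>i. c \<le> z$i"
  shows "norm (vdiv x z) \<le> norm x / c"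
proof -
  have "norm (vdiv x z) \<le> 1 / c * norm x"
  proof (rule norm_le_scaled_componentwise_cart)
    show "0 \<le> 1 / c"
      using assms(1) by simp
    fix i
    have z: "0 < z$i"
      using assms order_less_le_trans by blast
    then have "\<bar>x$i\<bar> / z$i \<le> \<bar>x$i\<bar> / c"
      using assms by (intro divide_left_mono) auto
    then show "\<bar>vdiv x z $ i\<bar> \<le> 1 / c * \<bar>x$i\<bar>"
      using z by (simp add: vdiv_def abs_divide)
  qed
  then show ?thesis
    by simp
qed

lemma infnorm_sketched_projection_le:
  fixes P :: "real^'n^'n"
  assumes P: "transpose P = P" "P ** P = P"
    and c: "\<And>i. \<bar>c$i\<bar> \<le> K" and close: "\<And>i. \<bar>y$i - (P *v v)$i\<bar> \<le> norm (P *v v) / 5"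
  shows "infnorm (vmul c y) \<le> K * (6/5 * norm v)"
    and "infnorm (vmul c (v - y)) \<le> K * (6/5 * norm v)"
proof -
  note projection = projection_norm_le[OF P, of v]
  show "infnorm (vmul c y) \<le> K * (6/5 * norm v)"
  proof (rule infnorm_vmul_le[OF c])
    fix i
    have "\<bar>y$i\<bar> \<le> \<bar>(P *v v)$i\<bar> + \<bar>y$i - (P *v v)$i\<bar>"
      by simp
    then show "\<bar>y$i\<bar> \<le> 6/5 * norm v"
      using close[of i] component_le_norm_cart[of "P *v v" i] projection by linarith
  qed
  show "infnorm (vmul c (v - y)) \<le> K * (6/5 * norm v)"
  proof (rule infnorm_vmul_le[OF c])
    fix i
    have "\<bar>(v - y)$i\<bar> \<le> \<bar>(v - P *v v)$i\<bar> + \<bar>y$i - (P *v v)$i\<bar>"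
      by simp
    then show "\<bar>(v - y)$i\<bar> \<le> 6/5 * norm v"
      using close[of i] component_le_norm_cart[of "v - P *v v" i] projection by linarith
  qed
qed

section \<open>Multiplicative approximation\<close>

lemma approx_vec_abs_diff_le:
  assumes "approx_vec \<gamma> u v"
  shows "\<bar>u$i - v$i\<bar> \<le> \<gamma> * v$i"
  using assms by (auto simp: approx_vec_def abs_le_iff algebra_simps)

lemma approx_vec_abs_le:
  assumes "approx_vec \<gamma> u v" "0 \<le> v$i"
  shows "\<bar>u$i\<bar> \<le> (1 + \<gamma>) * v$i"
proof -
  have "(1 - \<gamma>) * v$i \<le> u$i" "u$i \<le> (1 + \<gamma>) * v$i"
    using assms(1) by (simp_all add: approx_vec_def)
  then show ?thesis
    using assms(2) by (simp add: abs_le_iff algebra_simps)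
qed

lemma approx_vec_const_lower:
  assumes "approx_vec \<gamma> z (\<chi> i. c)"
  shows "(1 - \<gamma>) * c \<le> z$i"
  using assms by (simp add: approx_vec_def)

lemma approx_vec_trans:
  assumes uv: "approx_vec a u v" and vw: "approx_vec b v w"
    and "0 \<le> a" "a \<le> 1" "0 \<le> b" "\<And>i. 0 \<le> w$i" and "a + b + a * b \<le> c"
  shows "approx_vec c u w"
  unfolding approx_vec_def
proof
  fix i
  have u: "(1 - a) * v$i \<le> u$i" "u$i \<le> (1 + a) * v$i"
    and v: "(1 - b) * w$i \<le> v$i" "v$i \<le> (1 + b) * w$i"
    using uv vw by (auto simp: approx_vec_def)
  have "0 \<le> a * b"
    using assms(3,5) by simp
  then have "(1 - c) * w$i \<le> (1 - a - b + a * b) * w$i"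
    using assms(7) assms(6)[of i] by (intro mult_right_mono) auto
  also have "\<dots> = (1 - a) * ((1 - b) * w$i)"
    by (simp add: algebra_simps)
  also have "\<dots> \<le> u$i"
    using u(1) v(1) assms(4) by (meson diff_ge_0_iff_ge mult_left_mono order_trans)
  finally have lower: "(1 - c) * w$i \<le> u$i" .
  have "u$i \<le> (1 + a) * ((1 + b) * w$i)"
    using u(2) v(2) assms(3) by (meson add_nonneg_nonneg mult_left_mono order_trans zero_le_one)
  also have "\<dots> = (1 + a + b + a * b) * w$i"
    by (simp add: algebra_simps)
  also have "\<dots> \<le> (1 + c) * w$i"
    using assms(7) assms(6)[of i] by (intro mult_right_mono) auto
  finally show "(1 - c) * w$i \<le> u$i \<and> u$i \<le> (1 + c) * w$i"
    using lower by simp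
qed

lemma approx_vec_vsqrt_of_squares:
  assumes "0 \<le> \<gamma>" "\<gamma> \<le> 1" and v: "\<And>i. 0 \<le> v$i"
    and u: "\<And>i. (1 - \<gamma>)\<^sup>2 * v$i \<le> u$i \<and> u$i \<le> (1 + \<gamma>)\<^sup>2 * v$i"
  shows "approx_vec \<gamma> (vsqrt u) (vsqrt v)"
  unfolding approx_vec_def vsqrt_def
proof (intro allI conjI)
  fix i
  have "sqrt ((1 - \<gamma>)\<^sup>2 * v$i) \<le> sqrt (u$i)" "sqrt (u$i) \<le> sqrt ((1 + \<gamma>)\<^sup>2 * v$i)"
    using u[of i] by (simp_all only: real_sqrt_le_iff)
  then show "(1 - \<gamma>) * (\<chi> i. sqrt (v$i)) $ i \<le> (\<chi> i. sqrt (u$i)) $ i"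
    "(\<chi> i. sqrt (u$i)) $ i \<le> (1 + \<gamma>) * (\<chi> i. sqrt (v$i)) $ i"
    using assms(1,2) by (simp_all add: real_sqrt_mult)
qed

lemma approx_vec_vsqrt:
  assumes "approx_vec \<gamma> u v" "0 \<le> \<gamma>" "\<gamma> \<le> 1" "\<And>i. 0 \<le> v$i"
  shows "approx_vec \<gamma> (vsqrt u) (vsqrt v)"
proof (rule approx_vec_vsqrt_of_squares)
  fix i
  have "(1 - \<gamma>)\<^sup>2 \<le> 1 - \<gamma>" "1 + \<gamma> \<le> (1 + \<gamma>)\<^sup>2"
    using assms(2,3) by (simp_all add: power2_eq_square mult_left_le_one_le)
  then show "(1 - \<gamma>)\<^sup>2 * v$i \<le> u$i \<and> u$i \<le> (1 + \<gamma>)\<^sup>2 * v$i"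
    using assms(1) assms(4)[of i] unfolding approx_vec_def
    by (meson mult_right_mono order_trans)
qed (use assms in auto)

lemma approx_vec_vsqrt_const:
  assumes "approx_vec e mu m" and "approx_vec (1/10) m (\<chi> i. t)"
    and "0 \<le> e" "e \<le> 1/1000" "0 < t"
  shows "approx_vec (11/100) (vsqrt mu) (\<chi> i. sqrt t)"
proof -
  have mu: "approx_vec (11/100) mu (\<chi> i. t)"
    using assms(3-5) by (intro approx_vec_trans[OF assms(1,2)]) auto
  show ?thesis
    using approx_vec_vsqrt[OF mu] assms(5) by (simp add: vsqrt_def)
qed

lemma approx_vec_vsqrt_vmul:
  assumes u: "approx_vec e u u'" and v: "approx_vec e v v'" and "0 \<le> e" "e \<le> 1"
    and "\<And>i. 0 \<le> u'$i" "\<And>i. 0 \<le> v'$i"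
  shows "approx_vec e (vsqrt (vmul u v)) (vsqrt (vmul u' v'))"
proof (rule approx_vec_vsqrt_of_squares)
  fix i
  have ui: "(1 - e) * u'$i \<le> u$i" "u$i \<le> (1 + e) * u'$i"
    and vi: "(1 - e) * v'$i \<le> v$i" "v$i \<le> (1 + e) * v'$i"
    using u v by (auto simp: approx_vec_def)
  have lo: "0 \<le> (1 - e) * u'$i" "0 \<le> (1 - e) * v'$i"
    using assms(4) assms(5)[of i] assms(6)[of i] by simp_all
  have "((1 - e) * u'$i) * ((1 - e) * v'$i) \<le> u$i * v$i"
    using ui(1) vi(1) lo by (intro mult_mono) auto
  moreover have "u$i * v$i \<le> ((1 + e) * u'$i) * ((1 + e) * v'$i)"
    using ui vi lo by (intro mult_mono) auto
  ultimately show "(1 - e)\<^sup>2 * vmul u' v' $ i \<le> vmul u v $ i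
                   \<and> vmul u v $ i \<le> (1 + e)\<^sup>2 * vmul u' v' $ i"
    by (simp add: vmul_def power2_eq_square algebra_simps)
qed (use assms in \<open>auto simp: vmul_def\<close>)

lemma approx_vec_vsqrt_vdiv:
  assumes u: "approx_vec e u u'" and v: "approx_vec e v v'" and e: "0 \<le> e" "e \<le> 1/2"
    and pos: "vpos u'" "vpos v'"
  shows "approx_vec (2 * e) (vsqrt (vdiv u v)) (vsqrt (vdiv u' v'))"
proof (rule approx_vec_vsqrt_of_squares)
  fix i
  have ui: "(1 - e) * u'$i \<le> u$i" "u$i \<le> (1 + e) * u'$i"
    and vi: "(1 - e) * v'$i \<le> v$i" "v$i \<le> (1 + e) * v'$i"
    using u v by (auto simp: approx_vec_def)
  have u': "0 < u'$i" and v': "0 < v'$i"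
    using pos by (auto simp: vpos_def)
  have "0 < (1 - e) * v'$i"
    using e v' by simp
  then have v_pos: "0 < v$i"
    using vi(1) by linarith
  have "e\<^sup>2 \<le> 1/4"
    using e power_mono[of e "1/2" 2] by (simp add: power_divide)
  then have "0 \<le> 2 * e * (1 - 2 * e\<^sup>2)"
    using e by simp
  then have poly: "(1 - 2 * e)\<^sup>2 * (1 + e) \<le> 1 - e" "1 + e \<le> (1 + 2 * e)\<^sup>2 * (1 - e)"
    by (simp_all add: power2_eq_square algebra_simps)
  have "(1 - 2 * e)\<^sup>2 * u'$i * v$i \<le> (1 - 2 * e)\<^sup>2 * u'$i * ((1 + e) * v'$i)"
    using vi(2) u' by (intro mult_left_mono) auto
  also have "\<dots> \<le> (1 - e) * u'$i * v'$i"
    using poly(1) u' v' by (simp add: mult.assoc[symmetric] mult_right_mono)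
  also have "\<dots> \<le> u$i * v'$i"
    using ui(1) v' by (simp add: mult_right_mono)
  finally have lower: "(1 - 2 * e)\<^sup>2 * (u'$i / v'$i) \<le> u$i / v$i"
    using v_pos v' by (simp add: field_simps)
  have "u$i * v'$i \<le> (1 + e) * u'$i * v'$i"
    using ui(2) v' by (simp add: mult_right_mono)
  also have "\<dots> \<le> (1 + 2 * e)\<^sup>2 * u'$i * ((1 - e) * v'$i)"
    using poly(2) u' v' by (simp add: mult.assoc[symmetric] mult_right_mono)
  also have "\<dots> \<le> (1 + 2 * e)\<^sup>2 * u'$i * v$i"
    using vi(1) u' by (intro mult_left_mono) auto
  finally have upper: "u$i / v$i \<le> (1 + 2 * e)\<^sup>2 * (u'$i / v'$i)"
    using v_pos v' by (simp add: field_simps)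
  show "(1 - 2 * e)\<^sup>2 * vdiv u' v' $ i \<le> vdiv u v $ i
        \<and> vdiv u v $ i \<le> (1 + 2 * e)\<^sup>2 * vdiv u' v' $ i"
    using lower upper by (simp add: vdiv_def)
next
  show "0 \<le> vdiv u' v' $ i" for i
    using pos by (simp add: vpos_def vdiv_def less_imp_le)
qed (use e in auto)

lemma approx_vec_primal_dual:
  assumes w: "approx_vec e w (vdiv x s)" and mu: "approx_vec e mu (vmul x s)"
    and pos: "vpos x" "vpos s" and e: "0 \<le> e" "e \<le> 1/2"
  shows "approx_vec e (vsqrt (vmul w mu)) x" and "approx_vec (2 * e) (vsqrt (vdiv mu w)) s"
proof -
  have "vsqrt (vmul (vdiv x s) (vmul x s)) = x" "vsqrt (vdiv (vmul x s) (vdiv x s)) = s"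
    using pos unfolding vpos_def
    by (simp_all add: vsqrt_def vmul_def vdiv_def vec_eq_iff less_imp_le
        order.strict_implies_not_eq[symmetric] flip: power2_eq_square)
  moreover have "vpos (vdiv x s)" "vpos (vmul x s)"
    using pos by (simp_all add: vpos_def vdiv_def vmul_def)
  ultimately show "approx_vec e (vsqrt (vmul w mu)) x" "approx_vec (2 * e) (vsqrt (vdiv mu w)) s"
    using approx_vec_vsqrt_vmul[OF w mu] approx_vec_vsqrt_vdiv[OF mu w] e
    by (auto simp: vpos_def less_imp_le)
qed

lemma vmul_vsqrt_weight_mu:
  assumes "vpos w" "vpos mu"
  shows "vmul (vsqrt (vmul w mu)) (vsqrt (vdiv mu w)) = mu"
  using assms unfolding vpos_def
  by (simp add: vsqrt_def vmul_def vdiv_def vec_eq_iff less_imp_le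
      order.strict_implies_not_eq[symmetric] flip: real_sqrt_mult)

lemma infnorm_relative_error_le:
  assumes "approx_vec \<gamma> u v" "vpos v"
  shows "infnorm (vdiv (v - u) v) \<le> \<gamma>"
proof (rule infnorm_le_cart)
  fix i
  have "0 < v$i"
    using assms(2) by (simp add: vpos_def)
  then show "\<bar>vdiv (v - u) v $ i\<bar> \<le> \<gamma>"
    using approx_vec_abs_diff_le[OF assms(1), of i]
    by (simp add: vdiv_def abs_divide abs_minus_commute divide_le_eq)
qed

lemma abs_vdiv_vdiv_le:
  assumes u: "approx_vec \<gamma> u v" "vpos v" and z: "approx_vec \<delta> z (\<chi> i. c)" "\<delta> < 1" "0 < c"
  shows "\<bar>vdiv (vdiv u z) v $ i\<bar> \<le> (1 + \<gamma>) / ((1 - \<delta>) * c)"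
proof -
  have v: "0 < v$i"
    using u(2) by (simp add: vpos_def)
  have zc: "0 < (1 - \<delta>) * c" "(1 - \<delta>) * c \<le> z$i"
    using approx_vec_const_lower[OF z(1)] z(2,3) by simp_all
  have "\<bar>u$i\<bar> / v$i \<le> 1 + \<gamma>"
    using approx_vec_abs_le[OF u(1), of i] v by (simp add: divide_le_eq)
  moreover have "0 \<le> \<bar>u$i\<bar> / v$i"
    using v by simp
  ultimately have "\<bar>u$i\<bar> / v$i / z$i \<le> (1 + \<gamma>) / ((1 - \<delta>) * c)"
    using zc by (intro frac_le) linarith+
  then show ?thesis
    using v zc by (simp add: vdiv_def abs_divide ac_simps)
qed

section \<open>The centering step\<close>

lemma centering_step_size:
  fixes g :: "real^'n"
  assumes eps: "0 < eps" "eps \<le> 3" and "0 < t" "g \<noteq> 0"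
  defines "tnew \<equiv> (1 - eps / (3 * sqrt CARD('n))) * t"
  shows "\<bar>tnew / t - 1\<bar> * sqrt CARD('n) = eps / 3"
    and "norm ((- (eps / 2) * tnew / norm g) *\<^sub>R g) \<le> eps / 2 * t"
proof -
  have n: "1 \<le> sqrt CARD('n)"
    by simp
  show "\<bar>tnew / t - 1\<bar> * sqrt CARD('n) = eps / 3"
    using eps(1) \<open>0 < t\<close> n by (simp add: tnew_def abs_divide)
  have "eps / (3 * sqrt CARD('n)) \<le> 1"
    using eps(2) n by (subst divide_le_eq_1_pos) linarith+
  then have tnew: "0 \<le> tnew" "tnew \<le> t"
    using eps(1) \<open>0 < t\<close> n by (simp_all add: tnew_def)
  have "norm ((- (eps / 2) * tnew / norm g) *\<^sub>R g) = eps / 2 * tnew"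
    using eps(1) \<open>g \<noteq> 0\<close> tnew(1) by (simp add: abs_mult abs_divide)
  moreover have "eps / 2 * tnew \<le> eps / 2 * t"
    using tnew(2) eps(1) by (intro mult_left_mono) auto
  ultimately show "norm ((- (eps / 2) * tnew / norm g) *\<^sub>R g) \<le> eps / 2 * t"
    by linarith
qed

lemma norm_vdiv_centering_le:
  fixes mu d :: "real^'n"
  assumes z: "approx_vec \<gamma> (vsqrt mu) (\<chi> i. c)" and "\<gamma> < 1" "0 < c"
  shows "norm (vdiv (a *\<^sub>R mu + d) (vsqrt mu))
           \<le> \<bar>a\<bar> * ((1 + \<gamma>) * c * sqrt CARD('n)) + norm d / ((1 - \<gamma>) * c)"
proof -
  have zc: "0 < (1 - \<gamma>) * c" "\<And>i. (1 - \<gamma>) * c \<le> vsqrt mu $ i"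
    using approx_vec_const_lower[OF z] assms(2,3) by simp_all
  then have "0 < mu$i" for i
    using order_less_le_trans[OF zc(1) zc(2)[of i]] by (simp add: vsqrt_def)
  then have "vdiv mu (vsqrt mu) = vsqrt mu"
    by (simp add: vdiv_def vsqrt_def vec_eq_iff real_div_sqrt less_imp_le)
  then have "vdiv (a *\<^sub>R mu + d) (vsqrt mu) = a *\<^sub>R vsqrt mu + vdiv d (vsqrt mu)"
    by (simp only: vdiv_add_left vdiv_scaleR_left)
  then have "norm (vdiv (a *\<^sub>R mu + d) (vsqrt mu))
             \<le> \<bar>a\<bar> * norm (vsqrt mu) + norm (vdiv d (vsqrt mu))"
    using norm_triangle_ineq[of "a *\<^sub>R vsqrt mu" "vdiv d (vsqrt mu)"] by simp
  also have "\<dots> \<le> \<bar>a\<bar> * ((1 + \<gamma>) * c * sqrt CARD('n)) + norm d / ((1 - \<gamma>) * c)"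
  proof (intro add_mono mult_left_mono)
    show "norm (vsqrt mu) \<le> (1 + \<gamma>) * c * sqrt CARD('n)"
      using approx_vec_abs_le[OF z] assms(3) norm_le_sqrt_card_cart[of "vsqrt mu" "(1 + \<gamma>) * c"]
      by (simp add: mult.commute)
    show "norm (vdiv d (vsqrt mu)) \<le> norm d / ((1 - \<gamma>) * c)"
      using zc by (rule norm_vdiv_le)
  qed simp
  finally show ?thesis .
qed

lemma norm_centering_direction_le:
  fixes mu d :: "real^'n"
  assumes z: "approx_vec (11/100) (vsqrt mu) (\<chi> i. sqrt t)" and "0 < t"
    and r: "\<bar>r\<bar> * sqrt CARD('n) \<le> eps / 3" and d: "norm d \<le> eps / 2 * t"
  shows "norm (vdiv (r *\<^sub>R mu + d) (vsqrt mu)) \<le> 94/100 * eps * sqrt t"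
proof -
  have sqrt_t: "0 < sqrt t"
    using \<open>0 < t\<close> by simp
  have "0 \<le> \<bar>r\<bar> * sqrt CARD('n)"
    by simp
  then have eps: "0 \<le> eps"
    using r by linarith
  have "norm (vdiv (r *\<^sub>R mu + d) (vsqrt mu))
        \<le> \<bar>r\<bar> * ((1 + 11/100) * sqrt t * sqrt CARD('n)) + norm d / ((1 - 11/100) * sqrt t)"
    using norm_vdiv_centering_le[OF z] sqrt_t by simp
  also have "\<bar>r\<bar> * ((1 + 11/100) * sqrt t * sqrt CARD('n))
             = (1 + 11/100) * sqrt t * (\<bar>r\<bar> * sqrt CARD('n))"
    by (simp add: ac_simps)
  also have "\<dots> + norm d / ((1 - 11/100) * sqrt t)
             \<le> (1 + 11/100) * sqrt t * (eps / 3) + eps / 2 * t / ((1 - 11/100) * sqrt t)"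
    using r d sqrt_t by (intro add_mono mult_left_mono divide_right_mono) simp_all
  also have "\<dots> \<le> 94/100 * eps * sqrt t"
    using sqrt_t eps \<open>0 < t\<close> by (simp add: field_simps real_div_sqrt)
  finally show ?thesis .
qed

lemma centering_step_bounds:
  fixes mu mu' d :: "real^'n"
  assumes mu': "approx_vec e mu' mu" and mu: "approx_vec (1/10) mu (\<chi> i. t)" and "0 < t"
    and e: "0 \<le> e" "e \<le> 1" and r: "\<bar>r\<bar> * sqrt CARD('n) \<le> eps / 3" and d: "norm d \<le> eps / 2 * t"
  shows "norm (vdiv (r *\<^sub>R mu' - r *\<^sub>R mu) mu) \<le> e * eps"
    and "norm (vdiv (r *\<^sub>R mu + d) mu) \<le> 5 * eps"
    and "infnorm (vdiv (r *\<^sub>R mu' + d) mu) \<le> 5 * eps"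
proof -
  have mu_lo: "9/10 * t \<le> mu$i" for i
    using approx_vec_const_lower[OF mu, of i] by simp
  then have mu_pos: "0 < mu$i" for i
    using \<open>0 < t\<close> by (meson mult_pos_pos order_less_le_trans zero_less_divide_iff zero_less_numeral)
  have "\<bar>r\<bar> \<le> \<bar>r\<bar> * sqrt CARD('n)"
    by (simp add: mult_le_cancel_left1)
  then have r1: "\<bar>r\<bar> \<le> eps / 3"
    using r by linarith
  then have eps: "0 \<le> eps"
    by linarith
  have "norm (vdiv d mu) \<le> norm d / (9/10 * t)"
    using \<open>0 < t\<close> mu_lo by (intro norm_vdiv_le) auto
  also have "\<dots> \<le> eps / 2 * t / (9/10 * t)"
    using d \<open>0 < t\<close> by (intro divide_right_mono) auto
  finally have d_mu: "norm (vdiv d mu) \<le> 5/9 * eps"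
    using \<open>0 < t\<close> by simp
  have "norm (vdiv (r *\<^sub>R mu' - r *\<^sub>R mu) mu) \<le> sqrt CARD('n) * (\<bar>r\<bar> * e)"
  proof (rule norm_le_sqrt_card_cart)
    fix i
    have "\<bar>mu'$i - mu$i\<bar> / mu$i \<le> e"
      using approx_vec_abs_diff_le[OF mu', of i] mu_pos[of i] by (simp add: divide_le_eq)
    then show "\<bar>vdiv (r *\<^sub>R mu' - r *\<^sub>R mu) mu $ i\<bar> \<le> \<bar>r\<bar> * e"
      using mu_pos[of i]
      by (simp add: vdiv_def abs_mult abs_divide mult_left_mono
          flip: right_diff_distrib times_divide_eq_right)
  qed
  also have "\<dots> = (\<bar>r\<bar> * sqrt CARD('n)) * e"
    by (simp add: ac_simps)
  also have "\<dots> \<le> eps / 3 * e"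
    by (rule mult_right_mono[OF r e(1)])
  also have "\<dots> \<le> e * eps"
    using mult_nonneg_nonneg[OF e(1) eps] by simp
  finally show "norm (vdiv (r *\<^sub>R mu' - r *\<^sub>R mu) mu) \<le> e * eps" .
  have "vdiv (r *\<^sub>R mu) mu = (\<chi> i. r)"
    using mu_pos by (simp add: vdiv_def vec_eq_iff order.strict_implies_not_eq[symmetric])
  then have "norm (vdiv (r *\<^sub>R mu) mu) \<le> sqrt CARD('n) * \<bar>r\<bar>"
    by (intro norm_le_sqrt_card_cart) simp
  then show "norm (vdiv (r *\<^sub>R mu + d) mu) \<le> 5 * eps"
    using norm_triangle_ineq[of "vdiv (r *\<^sub>R mu) mu" "vdiv d mu"] r d_mu eps
    by (simp add: vdiv_add_left mult.commute)
  have "\<bar>vdiv (r *\<^sub>R mu') mu $ i\<bar> \<le> \<bar>r\<bar> * (1 + e)" for i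
  proof -
    have "\<bar>mu'$i\<bar> / mu$i \<le> 1 + e"
      using approx_vec_abs_le[OF mu', of i] mu_pos[of i] by (simp add: divide_le_eq)
    then show ?thesis
      using mu_pos[of i]
      by (simp add: vdiv_def abs_mult abs_divide mult_left_mono flip: times_divide_eq_right)
  qed
  moreover have "\<bar>r\<bar> * (1 + e) \<le> eps / 3 * 2"
    using r1 e eps by (intro mult_mono) auto
  ultimately have "infnorm (vdiv (r *\<^sub>R mu') mu) \<le> eps / 3 * 2"
    by (intro infnorm_le_cart) (rule order_trans)
  then show "infnorm (vdiv (r *\<^sub>R mu' + d) mu) \<le> 5 * eps"
    using infnorm_triangle[of "vdiv (r *\<^sub>R mu') mu" "vdiv d mu"] infnorm_le_norm[of "vdiv d mu"]
      d_mu eps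
    by (simp add: vdiv_add_left)
qed

section \<open>Unbiased sketches\<close>

lemma expectation_vec_nth_pmf:
  fixes p :: "'a pmf" and f :: "'a \<Rightarrow> real^'n"
  assumes "finite (set_pmf p)"
  shows "measure_pmf.expectation p (\<lambda>x. f x $ i) = measure_pmf.expectation p f $ i"
proof -
  have "integral\<^sup>L p (\<lambda>x. (\<lambda>y. y $ i) (f x)) = (\<lambda>y. y $ i) (integral\<^sup>L p f)"
    using integrable_measure_pmf_finite[OF assms]
    by (rule integral_bounded_linear[OF bounded_linear_vec_nth])
  then show ?thesis
    by simp
qed

lemma variance_affine_pmf:
  fixes p :: "'a pmf" and X :: "'a \<Rightarrow> real"
  assumes "finite (set_pmf p)"
  shows "measure_pmf.variance p (\<lambda>x. \<alpha> + \<beta> * X x) = \<beta>\<^sup>2 * measure_pmf.variance p X"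
proof -
  have int: "integrable p f" for f :: "'a \<Rightarrow> real"
    by (rule integrable_measure_pmf_finite[OF assms])
  have "(\<alpha> + \<beta> * X x - measure_pmf.expectation p (\<lambda>x. \<alpha> + \<beta> * X x))\<^sup>2
        = \<beta>\<^sup>2 * (X x - measure_pmf.expectation p X)\<^sup>2" for x
    by (simp add: int power2_eq_square algebra_simps)
  then show ?thesis
    by simp
qed

(* The properties of a subsampled randomized Hadamard transform R, stated for S R = R^T R. *)
locale unbiased_sketch =
  fixes p :: "'a pmf" and S :: "'a \<Rightarrow> real^'n^'n" and b :: real
  assumes finite_support: "finite (set_pmf p)"
    and expectation_sketch: "\<And>h. measure_pmf.expectation p (\<lambda>R. S R *v h) = h"
    and second_moment_sketch:
      "\<And>h i. measure_pmf.expectation p (\<lambda>R. ((S R *v h)$i)\<^sup>2) \<le> (h$i)\<^sup>2 + (norm h)\<^sup>2 / b"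
    and tail_sketch: "\<And>h i \<delta>. 0 < \<delta> \<Longrightarrow> \<delta> < 1 \<Longrightarrow>
      measure_pmf.prob p {R. \<bar>(S R *v h)$i - h$i\<bar> > norm h * ln (CARD('n) / \<delta>) / sqrt b} \<le> \<delta>"
begin

lemma integrable_sketch [simp]:
  fixes f :: "'a \<Rightarrow> 'b::{banach, second_countable_topology}"
  shows "integrable (measure_pmf p) f"
  by (rule integrable_measure_pmf_finite[OF finite_support])

lemma expectation_vmul_sketch:
  "measure_pmf.expectation p (\<lambda>R. vmul c (S R *v h)) = vmul c h"
  using integral_bounded_linear[OF matrix_vector_mul_bounded_linear integrable_sketch,
      of "vdiag c" "\<lambda>R. S R *v h"]
  by (simp add: vdiag_mult_vec expectation_sketch)

lemma expectation_vmul_diff_sketch: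
  "measure_pmf.expectation p (\<lambda>R. vmul c (u - S R *v h)) = vmul c (u - h)"
proof -
  have "vmul c (u - S R *v h) = vmul c u - vmul c (S R *v h)" for R
    by (simp add: vmul_def vec_eq_iff algebra_simps)
  then show ?thesis
    by (simp add: expectation_vmul_sketch) (simp add: vmul_def vec_eq_iff algebra_simps)
qed

lemma variance_sketch_coordinate_le:
  "measure_pmf.variance p (\<lambda>R. \<alpha> + \<beta> * (S R *v h)$i) \<le> \<beta>\<^sup>2 * (norm h)\<^sup>2 / b"
proof -
  have mean: "measure_pmf.expectation p (\<lambda>R. (S R *v h)$i) = h$i"
    using expectation_vec_nth_pmf[OF finite_support, of "\<lambda>R. S R *v h" i] expectation_sketch[of h]
    by simp
  have "measure_pmf.variance p (\<lambda>R. (S R *v h)$i)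
        = measure_pmf.expectation p (\<lambda>R. ((S R *v h)$i)\<^sup>2) - (h$i)\<^sup>2"
    using measure_pmf.variance_eq[of p "\<lambda>R. (S R *v h)$i"] mean by simp
  also have "\<dots> \<le> (norm h)\<^sup>2 / b"
    using second_moment_sketch[of h i] by simp
  finally have "measure_pmf.variance p (\<lambda>R. (S R *v h)$i) \<le> (norm h)\<^sup>2 / b" .
  then have "\<beta>\<^sup>2 * measure_pmf.variance p (\<lambda>R. (S R *v h)$i) \<le> \<beta>\<^sup>2 * ((norm h)\<^sup>2 / b)"
    by (rule mult_left_mono) simp
  then show ?thesis
    by (simp only: variance_affine_pmf[OF finite_support] times_divide_eq_right)
qed

lemma sketch_uniformly_close:
  assumes n: "2 \<le> CARD('n)" and b: "1000 * (ln CARD('n))\<^sup>2 \<le> b"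
  shows "1 - 1 / real CARD('n) ^ 4
           \<le> measure_pmf.prob p {R. \<forall>i. \<bar>(S R *v h)$i - h$i\<bar> \<le> norm h / 5}"
proof -
  define n where "n = real CARD('n)"
  define \<delta> where "\<delta> = 1 / n ^ 5"
  have n2: "2 \<le> n" and ln_pos: "0 < ln n"
    using n by (simp_all add: n_def)
  have \<delta>: "0 < \<delta>" "\<delta> < 1"
    using n2 by (simp_all add: \<delta>_def)
  have ln_\<delta>: "ln (n / \<delta>) = 6 * ln n"
    using n2 by (simp add: \<delta>_def ln_mult ln_realpow)
  have "(31 * ln n)\<^sup>2 \<le> 1000 * (ln n)\<^sup>2"
    by (simp add: power_mult_distrib)
  also have "\<dots> \<le> b"
    using b by (simp add: n_def)
  finally have sqrt_b: "31 * ln n \<le> sqrt b"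
    by (rule real_le_rsqrt)
  moreover have "0 < sqrt b"
    using sqrt_b ln_pos by linarith
  ultimately have "ln (n / \<delta>) / sqrt b \<le> 1 / 5"
    using ln_pos by (simp add: ln_\<delta> divide_le_eq)
  then have threshold: "norm h * ln (n / \<delta>) / sqrt b \<le> norm h / 5"
    using mult_left_mono[of _ _ "norm h"] by fastforce
  define E where "E i = {R. \<bar>(S R *v h)$i - h$i\<bar> > norm h * ln (n / \<delta>) / sqrt b}" for i
  have "measure_pmf.prob p (\<Union>i. E i) \<le> (\<Sum>i\<in>UNIV. measure_pmf.prob p (E i))"
    by (rule measure_pmf.finite_measure_subadditive_finite) auto
  also have "\<dots> \<le> (\<Sum>i\<in>(UNIV :: 'n set). \<delta>)"
    using tail_sketch[OF \<delta>] by (intro sum_mono) (simp add: E_def n_def)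
  also have "\<dots> = 1 / n ^ 4"
    using n2 by (simp add: \<delta>_def n_def power_eq_if)
  finally have "1 - 1 / n ^ 4 \<le> 1 - measure_pmf.prob p (\<Union>i. E i)"
    by simp
  also have "\<dots> = measure_pmf.prob p (space (measure_pmf p) - (\<Union>i. E i))"
    by (rule measure_pmf.prob_compl[symmetric]) simp
  also have "\<dots> \<le> measure_pmf.prob p {R. \<forall>i. \<bar>(S R *v h)$i - h$i\<bar> \<le> norm h / 5}"
  proof (rule measure_pmf.finite_measure_mono)
    show "space (measure_pmf p) - (\<Union>i. E i) \<subseteq> {R. \<forall>i. \<bar>(S R *v h)$i - h$i\<bar> \<le> norm h / 5}"
    proof
      fix R
      assume "R \<in> space (measure_pmf p) - (\<Union>i. E i)"
      then have "\<bar>(S R *v h)$i - h$i\<bar> \<le> norm h * ln (n / \<delta>) / sqrt b" for i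
        by (simp add: E_def not_less)
      then show "R \<in> {R. \<forall>i. \<bar>(S R *v h)$i - h$i\<bar> \<le> norm h / 5}"
        using threshold by (blast intro: order_trans)
    qed
  qed simp
  finally show ?thesis
    by (simp add: n_def)
qed

lemma variance_vmul_sketch_le:
  assumes c: "\<And>i. \<bar>c$i\<bar> \<le> K" and Kh: "K * norm h \<le> C" and "0 \<le> b"
  shows "measure_pmf.variance p (\<lambda>R. vmul c (S R *v h) $ i) \<le> C\<^sup>2 / b"
    and "measure_pmf.variance p (\<lambda>R. vmul c (u - S R *v h) $ i) \<le> C\<^sup>2 / b"
proof -
  have "\<bar>c$i * norm h\<bar> \<le> \<bar>C\<bar>"
    using Kh mult_right_mono[OF c[of i] norm_ge_zero[of h]] by (simp add: abs_mult)
  then have "(c$i * norm h)\<^sup>2 \<le> C\<^sup>2"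
    by (simp only: abs_le_square_iff)
  then have "(c$i)\<^sup>2 * (norm h)\<^sup>2 / b \<le> C\<^sup>2 / b"
    using \<open>0 \<le> b\<close> by (simp add: divide_right_mono power_mult_distrib)
  then have var: "measure_pmf.variance p f \<le> C\<^sup>2 / b"
    if "f = (\<lambda>R. \<alpha> + \<beta> * (S R *v h)$i)" "\<beta>\<^sup>2 = (c$i)\<^sup>2" for f \<alpha> \<beta>
    unfolding that(1) using variance_sketch_coordinate_le[of \<alpha> \<beta> h i, unfolded that(2)] by linarith
  show "measure_pmf.variance p (\<lambda>R. vmul c (S R *v h) $ i) \<le> C\<^sup>2 / b"
    by (rule var[of _ 0 "c$i"]) (simp_all add: fun_eq_iff vmul_def)
  show "measure_pmf.variance p (\<lambda>R. vmul c (u - S R *v h) $ i) \<le> C\<^sup>2 / b"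
    by (rule var[of _ "c$i * u$i" "- c$i"]) (simp_all add: fun_eq_iff vmul_def algebra_simps)
qed

lemma sketched_projection_step:
  fixes P :: "real^'n^'n" and v cx cs :: "real^'n"
  assumes P: "transpose P = P" "P ** P = P"
    and cx: "\<And>i. \<bar>cx$i\<bar> \<le> K" and cs: "\<And>i. \<bar>cs$i\<bar> \<le> K" and Kv: "K * norm v \<le> C"
    and D: "6/5 * C \<le> D" and n: "2 \<le> CARD('n)" and b: "1000 * (ln CARD('n))\<^sup>2 \<le> b"
  defines "h \<equiv> P *v v"
  shows "norm (vmul cx (v - h)) \<le> C" and "norm (vmul cs h) \<le> C"
    and "measure_pmf.expectation p (\<lambda>R. vmul cx (v - S R *v h)) = vmul cx (v - h)"
    and "measure_pmf.expectation p (\<lambda>R. vmul cs (S R *v h)) = vmul cs h"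
    and "measure_pmf.variance p (\<lambda>R. vmul cx (v - S R *v h) $ i) \<le> C\<^sup>2 / b"
    and "measure_pmf.variance p (\<lambda>R. vmul cs (S R *v h) $ i) \<le> C\<^sup>2 / b"
    and "1 - 1 / real CARD('n) ^ 4 \<le> measure_pmf.prob p
           {R. infnorm (vmul cx (v - S R *v h)) \<le> D \<and> infnorm (vmul cs (S R *v h)) \<le> D}"
proof -
  have "0 \<le> K"
    using cx abs_ge_zero order_trans by blast
  then have Kh: "K * norm h \<le> C" "K * norm (v - h) \<le> C"
    using projection_norm_le[OF P, of v] Kv unfolding h_def by (meson mult_left_mono order_trans)+
  show "norm (vmul cx (v - h)) \<le> C" "norm (vmul cs h) \<le> C"
    using norm_vmul_le[OF cx, of "v - h"] norm_vmul_le[OF cs, of h] Kh by linarith+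
  show "measure_pmf.expectation p (\<lambda>R. vmul cx (v - S R *v h)) = vmul cx (v - h)"
    "measure_pmf.expectation p (\<lambda>R. vmul cs (S R *v h)) = vmul cs h"
    by (rule expectation_vmul_diff_sketch expectation_vmul_sketch)+
  have "0 \<le> b"
    using b zero_le_power2[of "ln CARD('n)"] by linarith
  then show "measure_pmf.variance p (\<lambda>R. vmul cx (v - S R *v h) $ i) \<le> C\<^sup>2 / b"
    "measure_pmf.variance p (\<lambda>R. vmul cs (S R *v h) $ i) \<le> C\<^sup>2 / b"
    using variance_vmul_sketch_le[OF cx Kh(1)] variance_vmul_sketch_le[OF cs Kh(1)] by blast+
  have "{R. \<forall>i. \<bar>(S R *v h)$i - h$i\<bar> \<le> norm h / 5}
        \<subseteq> {R. infnorm (vmul cx (v - S R *v h)) \<le> D \<and> infnorm (vmul cs (S R *v h)) \<le> D}"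
  proof safe
    fix R
    assume "\<forall>i. \<bar>(S R *v h)$i - h$i\<bar> \<le> norm h / 5"
    then have close: "\<And>i. \<bar>(S R *v h)$i - (P *v v)$i\<bar> \<le> norm (P *v v) / 5"
      unfolding h_def by blast
    show "infnorm (vmul cx (v - S R *v h)) \<le> D" "infnorm (vmul cs (S R *v h)) \<le> D"
      using infnorm_sketched_projection_le[OF P cx close]
        infnorm_sketched_projection_le[OF P cs close] Kv D by linarith+
  qed
  then have "measure_pmf.prob p {R. \<forall>i. \<bar>(S R *v h)$i - h$i\<bar> \<le> norm h / 5}
    \<le> measure_pmf.prob p
           {R. infnorm (vmul cx (v - S R *v h)) \<le> D \<and> infnorm (vmul cs (S R *v h)) \<le> D}"
    by (rule measure_pmf.finite_measure_mono) simp
  then show "1 - 1 / real CARD('n) ^ 4 \<le> measure_pmf.prob p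
           {R. infnorm (vmul cx (v - S R *v h)) \<le> D \<and> infnorm (vmul cs (S R *v h)) \<le> D}"
    using sketch_uniformly_close[OF n b, of h] by linarith
qed

end

theorem lemmaB16:
  fixes A :: "real^'n^'d"
    and p :: "(real^'n^'b) pmf"
    and eps eps_mp lam t :: real
    and xbar sbar wt mut :: "real^'n"
  defines "n \<equiv> real CARD('n)"
    and "b \<equiv> real CARD('b)"
  defines "tnew \<equiv> (1 - eps / (3 * sqrt n)) * t"
    and "wbar \<equiv> vdiv xbar sbar"
    and "mubar \<equiv> vmul xbar sbar"
  defines "dbar_t \<equiv> (tnew / t - 1) *\<^sub>R mubar"
    and "xt \<equiv> vsqrt (vmul wt mut)"
    and "st \<equiv> vsqrt (vdiv mut wt)"
    and "Pt \<equiv> vdiag (vsqrt wt) ** transpose A ** matrix_inv (A ** vdiag wt ** transpose A)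
               ** A ** vdiag (vsqrt wt)"
    and "dt_t \<equiv> (tnew / t - 1) *\<^sub>R mut"
    and "g \<equiv> gradPhi lam (\<chi> i. mut$i / t - 1)"
  defines "dt_Phi \<equiv> (- (eps / 2) * tnew / norm g) *\<^sub>R g"
  defines "dt_mu \<equiv> dt_t + dt_Phi"
    and "XSh \<equiv> vdiag (vinv (vsqrt (vmul xt st)))"
  defines "dt_x \<equiv> (vdiag xt ** XSh ** (mat 1 - Pt) ** XSh) *v dt_mu"
    and "dt_s \<equiv> (vdiag st ** XSh ** Pt ** XSh) *v dt_mu"
    and "dh_x \<equiv> (\<lambda>R::real^'n^'b. (vdiag xt ** XSh ** (mat 1 - transpose R ** R ** Pt) ** XSh) *v dt_mu)"
    and "dh_s \<equiv> (\<lambda>R::real^'n^'b. (vdiag st ** XSh ** (transpose R ** R ** Pt) ** XSh) *v dt_mu)"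
  assumes n2: "CARD('n) \<ge> 2"
    and d_le_n: "CARD('d) \<le> CARD('n)"
    and full_rank: "rank A = CARD('d)"
    and eps: "0 < eps" "eps < 10 powr -4"
    and eps_mp: "0 < eps_mp" "eps_mp < 10 powr -4"
    and lam: "lam > ln n"
    and t_pos: "t > 0"
    and pos: "vpos xbar" "vpos sbar" "vpos wt" "vpos mut"
    and approx_mu: "approx_vec eps_mp mut mubar"
    and approx_w: "approx_vec eps_mp wt wbar"
    and approx_t: "approx_vec 0.1 mubar (\<chi> i. t)"
    and g_nz: "g \<noteq> 0"
    and finite_R: "finite (set_pmf p)"
    and R_mean: "\<And>h::real^'n. measure_pmf.expectation p (\<lambda>R. (transpose R ** R) *v h) = h"
    and R_var: "\<And>(h::real^'n) i. measure_pmf.expectation p (\<lambda>R. (((transpose R ** R) *v h)$i)^2)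
                   \<le> (h$i)^2 + (norm h)^2 / b"
    and R_tail: "\<And>(h::real^'n) i \<delta>. 0 < \<delta> \<Longrightarrow> \<delta> < 1 \<Longrightarrow>
                   measure_pmf.prob p {R. \<bar>((transpose R ** R) *v h)$i - h$i\<bar> > norm h * ln (n / \<delta>) / sqrt b}
                   \<le> \<delta>"
    and b_large: "b \<ge> 1000 * (ln n)^2"
  shows
    "(norm (vdiv dt_s sbar) \<le> 2 * eps \<and>
     norm (vdiv dt_x xbar) \<le> 2 * eps \<and>
     norm (measure_pmf.expectation p (\<lambda>R. vdiv (dh_s R) sbar)) \<le> 2 * eps \<and>
     norm (measure_pmf.expectation p (\<lambda>R. vdiv (dh_x R) xbar)) \<le> 2 * eps \<and>
     norm (vdiv (dt_t - dbar_t) mubar) \<le> eps_mp * eps \<and>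
     norm (vdiv (dbar_t + dt_Phi) mubar) \<le> 5 * eps) \<and>
    (\<forall>i. measure_pmf.variance p (\<lambda>R. dh_x R $ i / xbar $ i) \<le> 2 * eps^2 / b \<and>
         measure_pmf.variance p (\<lambda>R. dh_s R $ i / sbar $ i) \<le> 2 * eps^2 / b) \<and>
    (infnorm (vdiv (xbar - xt) xbar) \<le> 2 * eps_mp \<and>
     infnorm (vdiv (sbar - st) sbar) \<le> 2 * eps_mp \<and>
     infnorm (vdiv dt_x xbar) \<le> 2 * eps \<and>
     infnorm (vdiv dt_s sbar) \<le> 2 * eps \<and>
     infnorm (vdiv dt_mu mubar) \<le> 5 * eps) \<and>
    (measure_pmf.prob p {R. infnorm (vdiv (dh_x R) xbar) \<le> 3 * eps \<and>
                            infnorm (vdiv (dh_s R) sbar) \<le> 3 * eps} \<ge> 1 - 1 / n^4)"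
proof -
  interpret unbiased_sketch p "\<lambda>R. transpose R ** R" b
    using finite_R R_mean R_var R_tail by unfold_locales (simp_all add: n_def)
  have small: "eps \<le> 3" "eps_mp \<le> 1/1000"
    using eps(2) eps_mp(2) by (simp_all add: powr_minus_divide)
  note step_size = centering_step_size[OF eps(1) small(1) t_pos g_nz, folded n_def,
      folded tnew_def, folded dt_Phi_def]
  have r: "\<bar>tnew / t - 1\<bar> * sqrt CARD('n) \<le> eps / 3" and Phi: "norm dt_Phi \<le> eps / 2 * t"
    using step_size unfolding n_def by linarith+
  have sm: "approx_vec (11/100) (vsqrt mut) (\<chi> i. sqrt t)"
    using eps_mp small t_pos by (intro approx_vec_vsqrt_const[OF approx_mu approx_t]) auto
  have xt: "approx_vec eps_mp xt xbar" and st: "approx_vec (2 * eps_mp) st sbar"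
    using approx_vec_primal_dual[OF approx_w[unfolded wbar_def] approx_mu[unfolded mubar_def]
        pos(1,2)] eps_mp small by (simp_all add: xt_def st_def)
  have Pt: "transpose Pt = Pt" "Pt ** Pt = Pt"
    using weighted_projection_symmetric_idempotent[OF full_rank pos(3)] by (simp_all add: Pt_def)
  define v where "v = vdiv dt_mu (vsqrt mut)"
  define cx where "cx = vdiv (vdiv xt (vsqrt mut)) xbar"
  define cs where "cs = vdiv (vdiv st (vsqrt mut)) sbar"
  (* 1.13 > (1 + 2 eps_mp) / 0.89, the bound of abs_vdiv_vdiv_le for cx and cs *)
  define K where "K = 113/100 / sqrt t"
  have XSh: "XSh = vdiag (vinv (vsqrt mut))"
    using vmul_vsqrt_weight_mu[OF pos(3,4)] by (simp add: XSh_def xt_def st_def)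
  have directions:
    "vdiv dt_x xbar = vmul cx (v - Pt *v v)"
    "vdiv dt_s sbar = vmul cs (Pt *v v)"
    "\<And>R. vdiv (dh_x R) xbar = vmul cx (v - (transpose R ** R) *v (Pt *v v))"
    "\<And>R. vdiv (dh_s R) sbar = vmul cs ((transpose R ** R) *v (Pt *v v))"
    by (simp_all add: dt_x_def dt_s_def dh_x_def dh_s_def XSh vdiag_scaled_mult_vec vdiv_vmul_left
        cx_def cs_def v_def matrix_vector_mult_diff_rdistrib matrix_vector_mul_assoc
        del: transpose_matrix_vector)
  have sqrt_t: "0 < sqrt t"
    using t_pos by simp
  have coefficient: "(1 + \<gamma>) / ((1 - 11/100) * sqrt t) \<le> K" if "\<gamma> \<le> 2 * eps_mp" for \<gamma>
    using that small(2) sqrt_t by (simp add: K_def divide_le_eq field_simps)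
  have cx: "\<bar>cx$i\<bar> \<le> K" and cs: "\<bar>cs$i\<bar> \<le> K" for i
    using abs_vdiv_vdiv_le[OF xt pos(1) sm, of i] abs_vdiv_vdiv_le[OF st pos(2) sm, of i]
      coefficient[of eps_mp] coefficient[of "2 * eps_mp"] eps_mp(1) sqrt_t
    by (simp_all add: cx_def cs_def)
  have "norm v \<le> 94/100 * eps * sqrt t"
    unfolding v_def dt_mu_def dt_t_def by (rule norm_centering_direction_le[OF sm t_pos r Phi])
  then have "K * norm v \<le> K * (94/100 * eps * sqrt t)"
    using sqrt_t by (intro mult_left_mono) (simp_all add: K_def)
  also have "\<dots> \<le> 11/10 * eps"
    using sqrt_t eps(1) by (simp add: K_def)
  finally have Kv: "K * norm v \<le> 11/10 * eps" .
  have "6/5 * (11/10 * eps) \<le> 3 * eps"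
    using eps(1) by simp
  note step = sketched_projection_step[OF Pt cx cs Kv this n2 b_large[unfolded n_def]]
  have e: "0 \<le> eps_mp" "eps_mp \<le> 1"
    using eps_mp(1) small(2) by simp_all
  note centering = centering_step_bounds[OF approx_mu approx_t t_pos e r Phi,
      folded dt_t_def dbar_t_def, folded dt_mu_def]
  have relative_errors:
    "infnorm (vdiv (xbar - xt) xbar) \<le> 2 * eps_mp" "infnorm (vdiv (sbar - st) sbar) \<le> 2 * eps_mp"
    using infnorm_relative_error_le[OF xt pos(1)] infnorm_relative_error_le[OF st pos(2)] eps_mp(1)
    by simp_all
  have "0 \<le> b"
    using b_large zero_le_power2[of "ln n"] by linarith
  moreover have "(11/10 * eps)\<^sup>2 = 121/100 * eps\<^sup>2"
    by (simp add: power2_eq_square)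
  then have "(11/10 * eps)\<^sup>2 \<le> 2 * eps\<^sup>2"
    using zero_le_power2[of eps] by linarith
  ultimately have C: "11/10 * eps \<le> 2 * eps" "(11/10 * eps)\<^sup>2 / b \<le> 2 * eps\<^sup>2 / b"
    using eps(1) by (simp_all add: divide_right_mono)
  have variances:
    "measure_pmf.variance p (\<lambda>R. vdiv (dh_x R) xbar $ i) \<le> 2 * eps\<^sup>2 / b"
    "measure_pmf.variance p (\<lambda>R. vdiv (dh_s R) sbar $ i) \<le> 2 * eps\<^sup>2 / b" for i
    unfolding directions using step(5,6)[of i] C(2) by linarith+
  have coordinates: "dh_x R $ i / xbar $ i = vdiv (dh_x R) xbar $ i"
    "dh_s R $ i / sbar $ i = vdiv (dh_s R) sbar $ i" for R i
    by (simp_all add: vdiv_def)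
  have norms: "norm (vdiv dt_x xbar) \<le> 2 * eps" "norm (vdiv dt_s sbar) \<le> 2 * eps"
    unfolding directions using step(1,2) C(1) by linarith+
  moreover have "norm (measure_pmf.expectation p (\<lambda>R. vdiv (dh_x R) xbar)) \<le> 2 * eps"
    "norm (measure_pmf.expectation p (\<lambda>R. vdiv (dh_s R) sbar)) \<le> 2 * eps"
    using norms unfolding directions step(3,4) .
  moreover have "infnorm (vdiv dt_x xbar) \<le> 2 * eps" "infnorm (vdiv dt_s sbar) \<le> 2 * eps"
    using norms infnorm_le_norm order_trans by blast+
  ultimately show ?thesis
    unfolding coordinates
    using centering relative_errors variances step(7)[folded directions n_def] by blast
qed

end
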